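(* In the setting below with $P=\mathfrak A$ and the normalized error criterion, suppose $\{S_d\}$ is polynomially tractable with constants $C,p>0$, $q\ge0$. Then $\lambda\in\ell_\tau$ for all $\tau>p/2$; $\epsilon_d^{\rm init}$ tends to zero faster than the inverse of any polynomial as $d\to\infty$ (i.e. $\lambda_{d,\psi(1)}\mathcal P(d)\to0$ for every polynomial $\mathcal P$ positive on $\mathbb N$); $b_d\in O(\ln d)$; and hence $\lim_{d\to\infty}a_d/d=1$. If moreover $\{S_d\}$ is strongly polynomially tractable, then $b_d\in O(1)$.
   Context: Setting: $S_1:H_1\to G_1$ is a compact linear operator between real Hilbert spaces ($H_1$ infinite-dimensional separable); $\lambda=(\lambda_m)_{m\in\mathbb N}$, $\lambda_1\ge\lambda_2\ge\dots\ge0$, are the eigenvalues of $S_1^\dagger S_1$. $S_d=S_1^{\otimes d}:H_1^{\otimes d}\to G_1^{\otimes d}$. For each $d$ fix $\emptyset\ne I_d=\{i_1<\dots<i_{a_d}\}\subset\{1,\dots,d\}$ ($I_1=\{1\}$), put $a_d=\#I_d$, $b_d=d-a_d$, and fix one type $P\in\{\mathfrak S,\mathfrak A\}$ for all $d$; the problem $\{S_d\}$ is the family of restrictions of $S_d$ to the $I_d$-symmetric subspace (if $P=\mathfrak S$) or $I_d$-antisymmetric subspace (if $P=\mathfrak A$) of $H_1^{\otimes d}$, i.e. the range of $\frac1{a_d!}\sum_{\pi}(\pm1)U_\pi$, the sum over permutations $\pi$ of $\{1,\dots,d\}$ fixing all points outside $I_d$, $U_\pi(f_1\otimes\cdots\otimes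 f_d)=f_{\pi(1)}\otimes\cdots\otimes f_{\pi(d)}$, sign $(-1)^{|\pi|}$ used for $\mathfrak A$. Let $\nabla_d=\{k\in\mathbb N^d:k_{i_1}\le\dots\le k_{i_{a_d}}\}$ for $P=\mathfrak S$ and with strict inequalities for $P=\mathfrak A$; $\lambda_{d,k}=\prod_{l=1}^d\lambda_{k_l}$; $\psi:\mathbb N\to\nabla_d$ a bijection with $\lambda_{d,\psi(1)}\ge\lambda_{d,\psi(2)}\ge\cdots$. These are exactly the eigenvalues of $S_d^\dagger S_d$ on the subspace, and the information complexity is $n(\epsilon,d)=\#\{k\in\nabla_d:\lambda_{d,k}>\epsilon^2\}$, the initial error $\epsilon^{\rm init}_d=\sqrt{\lambda_{d,\psi(1)}}$ (equal to $\lambda_1^{d/2}$ if $P=\mathfrak S$, and $\sqrt{\lambda_1^{b_d}\lambda_1\lambda_2\cdots\lambda_{a_d}}$ if $P=\mathfrak A$). Normalized error criterion: polynomially tractable means $\exists C,p>0,q\ge0$ with $n(\epsilon'\epsilon_d^{\rm init},d)\le C(\epsilon')^{-p}d^q$ for all $d\in\mathbb N,\epsilon'\in(0,1]$; strongly polynomially tractable: this with $q=0$. Standing assumptions: $\lambda_2>0$ and $\epsilon_d^{\rm init}>0$ for all $d$. $\ell_\tau$: sequences with $\sum_m\lambda_m^\tau<\infty$. *)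

theory Defs
  imports "HOL-Analysis.Analysis" "HOL-Library.Landau_Symbols"
    "HOL-Computational_Algebra.Polynomial"
begin

text \<open>Eigenvalue sequence lam is indexed from 1 (lam 0 is irrelevant).
  I d is the index set I_d inside {1..d}.\<close>

definition a_num :: "(nat \<Rightarrow> nat set) \<Rightarrow> nat \<Rightarrow> nat" where
  "a_num I d = card (I d)"

definition b_num :: "(nat \<Rightarrow> nat set) \<Rightarrow> nat \<Rightarrow> nat" where
  "b_num I d = d - card (I d)"

definition nablaA :: "(nat \<Rightarrow> nat set) \<Rightarrow> nat \<Rightarrow> (nat \<Rightarrow> nat) set" where
  "nablaA I d = {k \<in> {1..d} \<rightarrow>\<^sub>E {1..}.
      \<forall>i\<in>I d. \<forall>j\<in>I d. i < j \<longrightarrow> k i < k j}"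

definition lam_dk :: "(nat \<Rightarrow> real) \<Rightarrow> nat \<Rightarrow> (nat \<Rightarrow> nat) \<Rightarrow> real" where
  "lam_dk lam d k = (\<Prod>l\<in>{1..d}. lam (k l))"

text \<open>Largest eigenvalue lambda_{d,psi(1)}; the initial error is its square root.\<close>
definition lam_init :: "(nat \<Rightarrow> real) \<Rightarrow> (nat \<Rightarrow> nat set) \<Rightarrow> nat \<Rightarrow> real" where
  "lam_init lam I d = Sup (lam_dk lam d ` nablaA I d)"

definition eps_init :: "(nat \<Rightarrow> real) \<Rightarrow> (nat \<Rightarrow> nat set) \<Rightarrow> nat \<Rightarrow> real" where
  "eps_init lam I d = sqrt (lam_init lam I d)"

text \<open>The set counted by the information complexity n(eps,d).\<close>
definition info_set :: "(nat \<Rightarrow> real) \<Rightarrow> (nat \<Rightarrow> nat set) \<Rightarrow> real \<Rightarrow> nat \<Rightarrow> (nat \<Rightarrow> nat) set" where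
  "info_set lam I eps d = {k \<in> nablaA I d. lam_dk lam d k > eps\<^sup>2}"

text \<open>n(eps' * eps_init_d, d) \<le> C eps'^(-p) d^q, with n finite (an infinite
  complexity violates any such bound).\<close>
definition normalized_bound :: "(nat \<Rightarrow> real) \<Rightarrow> (nat \<Rightarrow> nat set) \<Rightarrow> real \<Rightarrow> real \<Rightarrow> real \<Rightarrow> bool" where
  "normalized_bound lam I C p q \<longleftrightarrow>
     (\<forall>d\<ge>1. \<forall>e. 0 < e \<and> e \<le> 1 \<longrightarrow>
        finite (info_set lam I (e * eps_init lam I d) d) \<and>
        real (card (info_set lam I (e * eps_init lam I d) d)) \<le> C * e powr (-p) * real d powr q)"

definition strongly_poly_tractable_A :: "(nat \<Rightarrow> real) \<Rightarrow> (nat \<Rightarrow> nat set) \<Rightarrow> bool" where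
  "strongly_poly_tractable_A lam I \<longleftrightarrow> (\<exists>C p. C > 0 \<and> p > 0 \<and> normalized_bound lam I C p 0)"

end

theory Submission
  imports Defs "HOL-Real_Asymp.Real_Asymp"
begin

(*
  Write a_d, b_d for the sizes of I_d and of its complement in {1..d}.
  (1) Largest eigenvalue: every admissible multi-index k satisfies
      lambda_{d,k} <= lambda_1^{b_d} lambda_1 ... lambda_{a_d}, since the coordinates in I_d
      are pairwise distinct (a rearrangement argument); the multi-index numbering I_d by
      1, ..., a_d and putting 1 elsewhere attains the bound, so it equals lam_init d.
  (2) Counting: raising j of the b_d free coordinates from 1 to 2 yields (b_d choose j)
      multi-indices of eigenvalue (lambda_2/lambda_1)^j lam_init d.  Tractability thus
      bounds (b_d choose j) by C' c^j d^q, and an elementary growth estimate for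
      binomial coefficients gives b_d <= K (1 + q ln d).
  (3) Dimension one: lambda_1, ..., lambda_m all exceed lambda_m / 2, so m lambda_m^{p/2}
      is bounded, which places lambda in l_tau for every tau > p/2.
  (4) Decay: lambda_i -> 0 gives lambda_1 ... lambda_n <= Y 2^{-n}; with (1) and (2) this
      yields lam_init d <= Y' d^A 2^{-d}, which beats every polynomial.
  The statements about a_d / d and about b_d follow from the bound in (2) alone.
*)

text \<open>The normalized tolerance e = sqrt x enters tractability bounds as e^(-p).\<close>
lemma sqrt_powr_neg:
  fixes x p :: real
  assumes "x > 0"
  shows "sqrt x powr (-p) = (1 / x) powr (p / 2)"
proof -
  have "sqrt x powr (-p) = (x powr (1/2)) powr (-p)"
    using assms by (simp add: powr_half_sqrt)
  also have "\<dots> = inverse (x powr (p / 2))"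
    by (simp add: powr_powr powr_minus)
  also have "\<dots> = (1 / x) powr (p / 2)"
    by (metis inverse_eq_divide inverse_powr)
  finally show ?thesis .
qed

text \<open>If all binomial coefficients (b choose j) are bounded by A c^j, then b grows at most
  logarithmically in A: choose j about b / (3c) and use (b/j)^j <= (b choose j).\<close>
lemma binomial_log_bound:
  fixes b :: nat and A c :: real
  assumes c: "c \<ge> 1" and binom: "\<And>j. j \<le> b \<Longrightarrow> real (b choose j) \<le> A * c ^ j"
  shows "real b \<le> (3 * c + 1) * (ln A + 1)"
proof -
  have "1 \<le> A" using binom[of 0] by simp
  then have lnA: "ln A \<ge> 0" by simp
  define m where "m = nat \<lceil>3 * c\<rceil>"
  have m_lower: "3 * c \<le> real m" and m_upper: "real m \<le> 3 * c + 1"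
    unfolding m_def using c by linarith+
  have m_pos: "m > 0" using m_lower c by linarith
  have "real b \<le> real m * (ln A + 1)"
  proof (cases "b < m")
    case True
    then have "real b \<le> real m * 1" by simp
    also have "\<dots> \<le> real m * (ln A + 1)" using lnA by (intro mult_left_mono) auto
    finally show ?thesis .
  next
    case False
    define j where "j = b div m"
    have j_pos: "j \<ge> 1" unfolding j_def using False m_pos div_greater_zero_iff[of b m] by linarith
    have j_le_b: "j \<le> b" unfolding j_def by simp
    have "j * m \<le> b" unfolding j_def by simp
    then have jm_le_b: "real j * real m \<le> real b" by (simp flip: of_nat_mult)
    have "b = j * m + b mod m" unfolding j_def by simp
    moreover have "b mod m < m" using m_pos by simp
    ultimately have "b < m * (j + 1)" by (simp add: algebra_simps)
    then have "real b < real (m * (j + 1))" by (simp only: of_nat_less_iff)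
    then have b_less: "real b < real m * (real j + 1)" by (simp add: algebra_simps)
    have "3 * c * real j \<le> real m * real j" using m_lower by (intro mult_right_mono) auto
    also have "\<dots> \<le> real b" using jm_le_b by (simp add: mult.commute)
    finally have "3 * c \<le> real b / real j" using j_pos by (simp add: pos_le_divide_eq)
    then have "(3 * c) ^ j \<le> (real b / real j) ^ j" using c by (intro power_mono) auto
    also have "\<dots> \<le> real (b choose j)" by (rule binomial_ge_n_over_k_pow_k[OF j_le_b])
    also have "\<dots> \<le> A * c ^ j" by (rule binom[OF j_le_b])
    finally have "3 ^ j * c ^ j \<le> A * c ^ j" by (simp add: power_mult_distrib)
    then have "3 ^ j \<le> A" using c by simp
    then have "ln (3 ^ j) \<le> ln A" by (intro ln_mono) auto
    then have "real j * ln 3 \<le> ln A" by (simp add: ln_realpow)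
    moreover have "real j \<le> real j * ln 3"
      using mult_left_mono[of 1 "ln 3" "real j"] ln3_gt_1 by simp
    ultimately have "real j + 1 \<le> ln A + 1" by linarith
    then show ?thesis using b_less m_pos by (smt (verit) mult_left_mono of_nat_0_le_iff)
  qed
  also have "\<dots> \<le> (3 * c + 1) * (ln A + 1)" using m_upper lnA by (intro mult_right_mono) auto
  finally show ?thesis .
qed

lemma power_powr_commute:
  fixes x u :: real
  assumes "x > 0"
  shows "(x ^ n) powr u = (x powr u) ^ n"
proof -
  have "(x ^ n) powr u = (x powr real n) powr u" using assms by (simp add: powr_realpow)
  also have "\<dots> = x powr (real n * u)" by (rule powr_powr)
  also have "\<dots> = (x powr u) ^ n" using assms by (simp add: powr_power)
  finally show ?thesis .
qed

lemma poly_growth_bound: "\<exists>K\<ge>0. \<exists>N. \<forall>x::real. x \<ge> 1 \<longrightarrow> \<bar>poly P x\<bar> \<le> K * x ^ N"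
proof (induction P)
  case 0
  then show ?case by (intro exI[of _ 0]) auto
next
  case (pCons a P)
  then obtain K N where K: "K \<ge> 0" "\<forall>x::real. x \<ge> 1 \<longrightarrow> \<bar>poly P x\<bar> \<le> K * x ^ N" by blast
  show ?case
  proof (intro exI[of _ "\<bar>a\<bar> + K"] exI[of _ "Suc N"] conjI allI impI)
    show "\<bar>a\<bar> + K \<ge> 0" using K by simp
    fix x :: real assume x: "x \<ge> 1"
    have "\<bar>poly (pCons a P) x\<bar> \<le> \<bar>a\<bar> + x * \<bar>poly P x\<bar>"
      using x by (simp add: abs_mult abs_triangle_ineq[THEN order_trans])
    also have "x * \<bar>poly P x\<bar> \<le> x * (K * x ^ N)" using K x by (intro mult_left_mono) auto
    also have "\<bar>a\<bar> \<le> \<bar>a\<bar> * x ^ Suc N"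
      using one_le_power[of x "Suc N"] x by (intro mult_le_cancel_left1[THEN iffD2]) auto
    finally show "\<bar>poly (pCons a P) x\<bar> \<le> (\<bar>a\<bar> + K) * x ^ Suc N" by (simp add: algebra_simps)
  qed
qed

text \<open>A sequence with m f(m)^(p/2) bounded lies in l_tau for every tau > p/2,
  by comparison with the p-series of exponent 2 tau / p > 1.\<close>
lemma summable_powr_from_decay:
  fixes f :: "nat \<Rightarrow> real" and B p \<tau> :: real
  assumes B: "B \<ge> 0"
    and decay: "\<And>m. m \<ge> 1 \<Longrightarrow> real m * f m powr (p/2) \<le> B"
    and p: "p > 0" and tau: "\<tau> > p / 2"
  shows "summable (\<lambda>m. f (Suc m) powr \<tau>)"
proof -
  define s where "s = 2 * \<tau> / p"
  have s1: "s > 1" unfolding s_def using p tau by (simp add: field_simps)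
  have "summable (\<lambda>n. real n powr (- s))" using s1 by (subst summable_real_powr_iff) simp
  then have "summable (\<lambda>n. real (Suc n) powr (- s))" by (subst summable_Suc_iff)
  then have majorant: "summable (\<lambda>m. B powr s * real (Suc m) powr (- s))"
    by (rule summable_mult)
  show ?thesis
  proof (rule summable_comparison_test[OF _ majorant], intro exI[of _ 0] allI impI)
    fix m :: nat
    have "f (Suc m) powr \<tau> = (f (Suc m) powr (p/2)) powr s"
      unfolding s_def using p by (simp add: powr_powr)
    also have "\<dots> \<le> (B / real (Suc m)) powr s"
      using decay[of "Suc m"] s1 by (intro powr_mono2) (auto simp: field_simps)
    also have "\<dots> = B powr s * real (Suc m) powr (- s)"
      by (simp add: powr_mult inverse_powr powr_minus divide_inverse)
    finally show "norm (f (Suc m) powr \<tau>) \<le> B powr s * real (Suc m) powr (- s)" by simp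
  qed
qed

text \<open>The rank of l in J counts the elements of J below l; it numbers J increasingly
  by 0, ..., card J - 1 and gives the extremal multi-index on I_d.\<close>
definition rank :: "nat set \<Rightarrow> nat \<Rightarrow> nat" where
  "rank J l = card {j\<in>J. j < l}"

lemma rank_mono: "finite J \<Longrightarrow> l \<in> J \<Longrightarrow> l' \<in> J \<Longrightarrow> l < l' \<Longrightarrow> rank J l < rank J l'"
  unfolding rank_def by (intro psubset_card_mono) auto

lemma rank_bij: "finite J \<Longrightarrow> bij_betw (rank J) J {..<card J}"
proof -
  assume fin: "finite J"
  have inj: "inj_on (rank J) J"
    unfolding inj_on_def by (metis fin linorder_neqE_nat less_irrefl rank_mono)
  have sub: "rank J ` J \<subseteq> {..<card J}"
    using fin unfolding rank_def by (auto intro!: psubset_card_mono)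
  have "card (rank J ` J) = card {..<card J}" using inj by (simp add: card_image)
  then have "rank J ` J = {..<card J}" using sub by (intro card_subset_eq) auto
  then show ?thesis using inj by (simp add: bij_betw_def)
qed

section \<open>The eigenvalues of the antisymmetric problem\<close>

definition raised_index :: "(nat \<Rightarrow> nat set) \<Rightarrow> nat \<Rightarrow> nat set \<Rightarrow> nat \<Rightarrow> nat" where
  "raised_index I d S = (\<lambda>l. if l \<in> {1..d} then
      (if l \<in> I d then rank (I d) l + 1 else if l \<in> S then 2 else 1) else undefined)"

locale eigen_setting =
  fixes lam :: "nat \<Rightarrow> real" and I :: "nat \<Rightarrow> nat set"
  assumes lam_nonneg: "\<And>m. m \<ge> 1 \<Longrightarrow> lam m \<ge> 0"
    and lam_mono: "\<And>m n. 1 \<le> m \<Longrightarrow> m \<le> n \<Longrightarrow> lam n \<le> lam m"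
    and lam2_pos: "lam 2 > 0"
    and I_sub: "\<And>d. d \<ge> 1 \<Longrightarrow> I d \<subseteq> {1..d}"
begin

lemma lam1_pos: "lam 1 > 0" and lam2_le_lam1: "lam 2 \<le> lam 1"
  using lam2_pos lam_mono[of 1 2] by auto

lemma prod_lam_nonneg: "(\<And>l. l \<in> A \<Longrightarrow> f l \<ge> 1) \<Longrightarrow> (\<Prod>l\<in>A. lam (f l)) \<ge> 0"
  by (intro prod_nonneg) (auto intro: lam_nonneg)

lemma finite_I: "d \<ge> 1 \<Longrightarrow> finite (I d)"
  using I_sub finite_subset by blast

lemma card_free: "d \<ge> 1 \<Longrightarrow> card ({1..d} - I d) = b_num I d"
  unfolding b_num_def using I_sub by (simp add: card_Diff_subset finite_I)

lemma a_plus_b: "d \<ge> 1 \<Longrightarrow> a_num I d + b_num I d = d"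
  using card_mono[OF _ I_sub, of d] unfolding a_num_def b_num_def by simp

lemma prod_split_I: "d \<ge> 1 \<Longrightarrow>
    (\<Prod>l\<in>{1..d}. g l) = (\<Prod>l\<in>I d. g l) * (\<Prod>l\<in>{1..d} - I d. g l)"
  using I_sub[of d] by (metis finite_atLeastAtMost prod.subset_diff mult.commute)

text \<open>Rearrangement: on n pairwise distinct indices the product of eigenvalues is at most
  lambda_1 ... lambda_n. Induct, removing the largest index, which is at least n.\<close>
lemma prod_lam_distinct_le:
  assumes "finite J" "inj_on f J" "\<And>l. l \<in> J \<Longrightarrow> f l \<ge> 1"
  shows "(\<Prod>l\<in>J. lam (f l)) \<le> (\<Prod>i=1..card J. lam i)"
  using assms
proof (induction "card J" arbitrary: J)
  case 0
  then show ?case by simp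
next
  case (Suc n)
  obtain x where x: "x \<in> J" "f x = Max (f ` J)"
    using Max_in[of "f ` J"] Suc by (metis card.empty finite_imageI image_iff image_is_empty nat.distinct(1))
  have "Suc n = card (f ` J)" using Suc by (simp add: card_image)
  also have "\<dots> \<le> card {1..f x}" using x Suc.prems by (intro card_mono) auto
  finally have "lam (f x) \<le> lam (Suc n)" by (intro lam_mono) auto
  moreover have "card (J - {x}) = n" using Suc x by simp
  then have "(\<Prod>l\<in>J - {x}. lam (f l)) \<le> (\<Prod>i=1..n. lam i)"
    using Suc.hyps(1)[of "J - {x}"] Suc.prems by (auto intro: inj_on_subset)
  ultimately have "lam (f x) * (\<Prod>l\<in>J - {x}. lam (f l)) \<le> lam (Suc n) * (\<Prod>i=1..n. lam i)"
    using Suc.prems by (intro mult_mono prod_lam_nonneg lam_nonneg) auto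
  moreover have "(\<Prod>l\<in>J. lam (f l)) = lam (f x) * (\<Prod>l\<in>J - {x}. lam (f l))"
    using Suc.prems x by (simp add: prod.remove)
  moreover have "lam (Suc n) * (\<Prod>i=1..n. lam i) = (\<Prod>i=1..Suc n. lam i)"
    by (simp add: prod.cl_ivl_Suc mult.commute)
  ultimately show ?case unfolding Suc.hyps(2)[symmetric] by (simp add: mult.commute)
qed

definition top_eig :: "nat \<Rightarrow> real" where
  "top_eig d = lam 1 ^ b_num I d * (\<Prod>i=1..a_num I d. lam i)"

lemma top_eig_nonneg: "top_eig d \<ge> 0"
  unfolding top_eig_def using lam1_pos by (intro mult_nonneg_nonneg prod_lam_nonneg) auto

lemma raised_index_in_nabla:
  assumes d: "d \<ge> 1"
  shows "raised_index I d S \<in> nablaA I d"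
proof -
  have "raised_index I d S \<in> {1..d} \<rightarrow>\<^sub>E {1..}" unfolding raised_index_def by auto
  moreover have "raised_index I d S i < raised_index I d S j"
    if "i \<in> I d" "j \<in> I d" "i < j" for i j
    using that I_sub[OF d] rank_mono[OF finite_I[OF d] that] unfolding raised_index_def by auto
  ultimately show ?thesis unfolding nablaA_def by blast
qed

lemma raised_index_inj:
  assumes "S \<subseteq> {1..d} - I d" "S' \<subseteq> {1..d} - I d" "raised_index I d S = raised_index I d S'"
  shows "S = S'"
proof -
  have "l \<in> S \<longleftrightarrow> l \<in> S'" if l: "l \<in> {1..d} - I d" for l
  proof -
    have raised_value: "raised_index I d T l = (if l \<in> T then 2 else 1)" for T
      using l by (simp add: raised_index_def)
    show ?thesis using fun_cong[OF assms(3), of l] unfolding raised_value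
      by (cases "l \<in> S"; cases "l \<in> S'") auto
  qed
  then show ?thesis using assms(1,2) by blast
qed

lemma raised_index_eig:
  assumes d: "d \<ge> 1" and S: "S \<subseteq> {1..d} - I d"
  shows "lam_dk lam d (raised_index I d S) = (lam 2 / lam 1) ^ card S * top_eig d"
proof -
  have finS: "finite S" using S finite_subset by blast
  have "(\<Prod>l\<in>I d. lam (raised_index I d S l)) = (\<Prod>l\<in>I d. lam (rank (I d) l + 1))"
    using I_sub[OF d] by (intro prod.cong) (auto simp: raised_index_def)
  also have "\<dots> = (\<Prod>i<card (I d). lam (i + 1))"
    using prod.reindex_bij_betw[OF rank_bij[OF finite_I[OF d]], of "\<lambda>i. lam (i + 1)"] by simp
  also have "\<dots> = (\<Prod>i=1..a_num I d. lam i)"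
    unfolding a_num_def by (rule prod.reindex_bij_witness[where i="\<lambda>i. i - 1" and j="\<lambda>i. i + 1"]) auto
  finally have on_I: "(\<Prod>l\<in>I d. lam (raised_index I d S l)) = (\<Prod>i=1..a_num I d. lam i)" .
  have "(\<Prod>l\<in>{1..d} - I d. lam (raised_index I d S l))
      = (\<Prod>l\<in>{1..d} - I d. if l \<in> S then lam 2 else lam 1)"
    by (intro prod.cong) (auto simp: raised_index_def)
  also have "\<dots> = lam 2 ^ card S * lam 1 ^ (b_num I d - card S)"
    using S finS card_free[OF d] by (simp add: prod.If_cases Int_absorb1 Diff_eq[symmetric] card_Diff_subset)
  also have "\<dots> = (lam 2 / lam 1) ^ card S * lam 1 ^ b_num I d"
    using card_mono[OF _ S] card_free[OF d] lam1_pos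
    by (simp add: power_divide power_diff)
  finally show ?thesis
    unfolding lam_dk_def top_eig_def prod_split_I[OF d] on_I by (simp add: mult_ac)
qed

text \<open>Upper bound for every admissible k: rearrangement on I_d, lambda_{k_l} <= lambda_1 on
  the free coordinates.\<close>
lemma eig_le_top_eig:
  assumes d: "d \<ge> 1" and k: "k \<in> nablaA I d"
  shows "lam_dk lam d k \<le> top_eig d"
proof -
  have k_pos: "\<And>l. l \<in> {1..d} \<Longrightarrow> k l \<ge> 1" and k_mono: "\<forall>i\<in>I d. \<forall>j\<in>I d. i < j \<longrightarrow> k i < k j"
    using k unfolding nablaA_def by (auto simp: PiE_iff)
  have "inj_on k (I d)"
    unfolding inj_on_def by (metis k_mono linorder_neqE_nat less_irrefl)
  then have on_I: "(\<Prod>l\<in>I d. lam (k l)) \<le> (\<Prod>i=1..a_num I d. lam i)"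
    unfolding a_num_def using k_pos I_sub[OF d] by (intro prod_lam_distinct_le finite_I[OF d]) auto
  have free: "(\<Prod>l\<in>{1..d} - I d. lam (k l)) \<le> lam 1 ^ b_num I d"
    using prod_mono[of "{1..d} - I d" "\<lambda>l. lam (k l)" "\<lambda>_. lam 1"] k_pos card_free[OF d]
    by (simp add: lam_nonneg lam_mono)
  have "lam_dk lam d k = (\<Prod>l\<in>I d. lam (k l)) * (\<Prod>l\<in>{1..d} - I d. lam (k l))"
    unfolding lam_dk_def by (rule prod_split_I[OF d])
  also have "\<dots> \<le> (\<Prod>i=1..a_num I d. lam i) * lam 1 ^ b_num I d"
    using k_pos by (intro mult_mono[OF on_I free] prod_lam_nonneg prod_nonneg lam_nonneg) auto
  finally show ?thesis unfolding top_eig_def by (simp add: mult.commute)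
qed

lemma lam_init_eq: assumes d: "d \<ge> 1" shows "lam_init lam I d = top_eig d"
  unfolding lam_init_def
proof (rule cSup_eq_maximum)
  show "top_eig d \<in> lam_dk lam d ` nablaA I d"
    using raised_index_eig[OF d, of "{}"] raised_index_in_nabla[OF d, of "{}"]
    by (metis empty_subsetI card.empty power_0 mult_1 image_eqI)
qed (use eig_le_top_eig[OF d] in blast)

section \<open>Consequences of tractability\<close>

lemma tractability_count:
  assumes PT: "normalized_bound lam I C p q" and d: "d \<ge> 1" and e: "0 < e" "e \<le> 1"
    and W: "W \<subseteq> nablaA I d"
    and large: "\<And>k. k \<in> W \<Longrightarrow> lam_dk lam d k > e\<^sup>2 * lam_init lam I d"
  shows "real (card W) \<le> C * e powr (-p) * real d powr q"
proof -
  define F where "F = info_set lam I (e * eps_init lam I d) d"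
  have F: "finite F" "real (card F) \<le> C * e powr (-p) * real d powr q"
    using PT d e unfolding normalized_bound_def F_def by auto
  have "(e * eps_init lam I d)\<^sup>2 = e\<^sup>2 * lam_init lam I d"
    unfolding eps_init_def using lam_init_eq[OF d] top_eig_nonneg by (simp add: power_mult_distrib)
  then have "W \<subseteq> F" using W large unfolding F_def info_set_def by auto
  then have "card W \<le> card F" by (rule card_mono[OF F(1)])
  then show ?thesis using F(2) by linarith
qed

text \<open>Step (2), counting: the (b_d choose j) multi-indices with j raised free coordinates
  have eigenvalue (lambda_2/lambda_1)^j lam_init d, which exceeds e^2 lam_init d for
  e^2 = (lambda_2/lambda_1)^j / 2; tractability bounds their number.\<close>
lemma binomial_free_bound:
  assumes PT: "normalized_bound lam I C p q" and d: "d \<ge> 1"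
    and init: "eps_init lam I d > 0"
  shows "real (b_num I d choose j)
           \<le> C * 2 powr (p/2) * real d powr q * ((lam 1 / lam 2) powr (p/2)) ^ j"
proof -
  define r where "r = lam 2 / lam 1"
  have r: "0 < r" "r \<le> 1" unfolding r_def using lam1_pos lam2_le_lam1 lam2_pos by auto
  then have rj: "0 < r ^ j" "r ^ j \<le> 1" by (auto simp: power_le_one)
  define e where "e = sqrt (r ^ j / 2)"
  have e: "0 < e" "e \<le> 1" and e2: "e\<^sup>2 = r ^ j / 2" unfolding e_def using rj by auto
  have init_pos: "lam_init lam I d > 0" using init unfolding eps_init_def by simp
  define Subsets where "Subsets = {S. S \<subseteq> {1..d} - I d \<and> card S = j}"
  have "real (card (raised_index I d ` Subsets)) \<le> C * e powr (-p) * real d powr q"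
  proof (rule tractability_count[OF PT d e])
    show "raised_index I d ` Subsets \<subseteq> nablaA I d" using raised_index_in_nabla[OF d] by auto
    fix k assume "k \<in> raised_index I d ` Subsets"
    then obtain S where S: "S \<subseteq> {1..d} - I d" "card S = j" "k = raised_index I d S"
      unfolding Subsets_def by blast
    have "lam_dk lam d k = r ^ j * lam_init lam I d"
      using raised_index_eig[OF d S(1)] S lam_init_eq[OF d] unfolding r_def by simp
    then show "lam_dk lam d k > e\<^sup>2 * lam_init lam I d" using e2 rj init_pos by simp
  qed
  moreover have "inj_on (raised_index I d) Subsets"
    unfolding Subsets_def by (intro inj_onI raised_index_inj) auto
  then have "card (raised_index I d ` Subsets) = b_num I d choose j"
    unfolding Subsets_def using card_free[OF d] by (simp add: card_image n_subsets)
  moreover have "e powr (-p) = (1 / (r ^ j / 2)) powr (p/2)"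
    unfolding e_def using rj by (simp add: sqrt_powr_neg)
  moreover have "1 / (r ^ j / 2) = 2 * (lam 1 / lam 2) ^ j"
    unfolding r_def using lam1_pos lam2_pos by (simp add: power_divide)
  moreover have "(2 * (lam 1 / lam 2) ^ j) powr (p/2) = 2 powr (p/2) * ((lam 1 / lam 2) powr (p/2)) ^ j"
    using lam1_pos lam2_pos by (simp add: powr_mult power_powr_commute)
  ultimately show ?thesis by (simp add: mult_ac)
qed

lemma free_coords_log_bound:
  assumes PT: "normalized_bound lam I C p q" and C: "C > 0" and p: "p \<ge> 0" and q: "q \<ge> 0"
    and init: "\<And>d. d \<ge> 1 \<Longrightarrow> eps_init lam I d > 0"
  shows "\<exists>K\<ge>0. \<forall>d\<ge>1. real (b_num I d) \<le> K * (1 + q * ln (real d))"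
proof -
  define c where "c = (lam 1 / lam 2) powr (p/2)"
  define C' where "C' = C * 2 powr (p/2)"
  have c: "c \<ge> 1" unfolding c_def using lam2_le_lam1 lam2_pos p
    by (intro ge_one_powr_ge_zero) (auto simp: field_simps)
  define K where "K = (3 * c + 1) * (\<bar>ln C'\<bar> + 1)"
  have "K \<ge> 0" unfolding K_def using c by simp
  moreover have "real (b_num I d) \<le> K * (1 + q * ln (real d))" if d: "d \<ge> 1" for d
  proof -
    have lnd: "q * ln (real d) \<ge> 0" using q d by simp
    have "real (b_num I d) \<le> (3 * c + 1) * (ln (C' * real d powr q) + 1)"
      using binomial_free_bound[OF PT d init[OF d]]
      by (intro binomial_log_bound[OF c]) (simp add: C'_def c_def mult_ac)
    also have "ln (C' * real d powr q) = ln C' + q * ln (real d)"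
      unfolding C'_def using C d by (simp add: ln_mult ln_powr)
    also have "(3 * c + 1) * (ln C' + q * ln (real d) + 1)
        \<le> (3 * c + 1) * ((\<bar>ln C'\<bar> + 1) * (1 + q * ln (real d)))"
    proof (rule mult_left_mono)
      have "(\<bar>ln C'\<bar> + 1) * (1 + q * ln (real d))
          = \<bar>ln C'\<bar> + 1 + q * ln (real d) + \<bar>ln C'\<bar> * (q * ln (real d))"
        by (simp add: algebra_simps)
      moreover have "\<bar>ln C'\<bar> * (q * ln (real d)) \<ge> 0" using lnd by simp
      ultimately show "ln C' + q * ln (real d) + 1 \<le> (\<bar>ln C'\<bar> + 1) * (1 + q * ln (real d))"
        by linarith
    qed (use c in simp)
    also have "\<dots> = K * (1 + q * ln (real d))" unfolding K_def by (simp add: mult.assoc)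
    finally show ?thesis .
  qed
  ultimately show ?thesis by blast
qed

lemma free_coords_bounded:
  assumes SPT: "strongly_poly_tractable_A lam I"
    and init: "\<And>d. d \<ge> 1 \<Longrightarrow> eps_init lam I d > 0"
  shows "(\<lambda>d. real (b_num I d)) \<in> O(\<lambda>_. 1)"
proof -
  obtain C p where C: "C > 0" and p: "p > 0" and PT: "normalized_bound lam I C p 0"
    using SPT unfolding strongly_poly_tractable_A_def by blast
  obtain K where K: "\<forall>d\<ge>1. real (b_num I d) \<le> K * (1 + 0 * ln (real d))"
    using free_coords_log_bound[OF PT C less_imp_le[OF p] order_refl init] by blast
  show ?thesis
  proof (rule bigoI[where c = K])
    show "\<forall>\<^sub>F d in at_top. norm (real (b_num I d)) \<le> K * norm (1::real)"
      using eventually_ge_at_top[of 1] by eventually_elim (use K in simp)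
  qed
qed

text \<open>Step (3): in dimension one the eigenvalues lambda_1, ..., lambda_m all exceed
  lambda_m / 2 = e^2 lambda_1, so m is bounded by the information complexity at e.\<close>
lemma dim_one_decay:
  assumes PT: "normalized_bound lam I C p q" and C: "C \<ge> 0"
    and I1: "I 1 = {1}" and m: "m \<ge> 1"
  shows "real m * lam m powr (p/2) \<le> C * (2 * lam 1) powr (p/2)"
proof (cases "lam m = 0")
  case True
  then show ?thesis using C by simp
next
  case False
  then have lm: "lam m > 0" using lam_nonneg[OF m] by simp
  have lm1: "lam m \<le> lam 1" using lam_mono[OF _ m] by simp
  define e where "e = sqrt (lam m / (2 * lam 1))"
  have e: "0 < e" "e \<le> 1" and e2: "e\<^sup>2 * lam 1 = lam m / 2"
    unfolding e_def using lm lm1 lam1_pos by auto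
  have init_1: "lam_init lam I 1 = lam 1"
    using lam_init_eq[of 1] unfolding top_eig_def a_num_def b_num_def I1 by simp
  define const_index where
    "const_index = (\<lambda>i::nat. \<lambda>l::nat. if l \<in> {1..1::nat} then i else undefined)"
  have "real (card (const_index ` {1..m})) \<le> C * e powr (-p) * real (1::nat) powr q"
  proof (rule tractability_count[OF PT order_refl e])
    show "const_index ` {1..m} \<subseteq> nablaA I 1"
      unfolding nablaA_def const_index_def I1 by (auto split: if_splits)
    fix k assume "k \<in> const_index ` {1..m}"
    then obtain i where i: "i \<in> {1..m}" "k = const_index i" by auto
    have "lam_dk lam 1 k = lam i" unfolding lam_dk_def i(2) const_index_def by simp
    moreover have "lam i \<ge> lam m" using lam_mono[of i m] i(1) by auto
    ultimately show "lam_dk lam 1 k > e\<^sup>2 * lam_init lam I 1" using init_1 e2 lm by simp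
  qed
  moreover have "inj_on const_index {1..m}"
  proof (rule inj_onI)
    fix x y assume "const_index x = const_index y"
    then have "const_index x 1 = const_index y 1" by simp
    then show "x = y" unfolding const_index_def by simp
  qed
  then have "card (const_index ` {1..m}) = m" by (simp add: card_image)
  moreover have "e powr (-p) = (2 * lam 1 / lam m) powr (p/2)"
    unfolding e_def using lm lam1_pos by (simp add: sqrt_powr_neg)
  ultimately have "real m \<le> C * ((2 * lam 1) powr (p/2) / lam m powr (p/2))"
    by (simp add: powr_divide)
  then show ?thesis using lm by (simp add: field_simps)
qed

lemma lam_summable_powr:
  assumes PT: "normalized_bound lam I C p q" and C: "C \<ge> 0" and p: "p > 0"
    and I1: "I 1 = {1}" and tau: "\<tau> > p / 2"
  shows "summable (\<lambda>m. lam (Suc m) powr \<tau>)"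
  using C dim_one_decay[OF PT C I1] p tau
  by (intro summable_powr_from_decay[where B = "C * (2 * lam 1) powr (p/2)"]) auto

text \<open>Step (4): eventually lambda_i < 1/2, hence lambda_1 ... lambda_n = O(2^{-n}):
  each factor is at most w_i / 2, where w_i = 2 max(1, lambda_1) for the finitely many
  i <= M and w_i = 1 afterwards.\<close>
lemma prod_lam_geometric:
  assumes lim: "lam \<longlonglongrightarrow> 0"
  obtains Y where "Y > 0" "\<And>n. (\<Prod>i=1..n. lam i) \<le> Y * (1/2) ^ n"
proof -
  obtain M where M: "\<And>n. n \<ge> M \<Longrightarrow> lam n < 1/2"
    using order_tendstoD(2)[OF lim, of "1/2"] by (auto simp: eventually_sequentially)
  define L where "L = max 1 (lam 1)"
  have L: "L \<ge> 1" "lam 1 \<le> L" unfolding L_def by auto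
  define W where "W = 2 * L"
  have W: "W \<ge> 1" unfolding W_def using L by simp
  define w where "w = (\<lambda>i. if i \<le> M then W else 1)"
  have factor: "0 \<le> lam i \<and> lam i \<le> (1/2) * w i" if "i \<ge> 1" for i
  proof (cases "i \<le> M")
    case True
    then show ?thesis using lam_nonneg lam_mono[of 1 i] L that unfolding w_def W_def by auto
  next
    case False
    then show ?thesis using lam_nonneg M[of i] that unfolding w_def by auto
  qed
  have "(\<Prod>i=1..n. lam i) \<le> (1/2) ^ n * W ^ M" for n
  proof -
    have "(\<Prod>i=1..n. lam i) \<le> (\<Prod>i=1..n. (1/2) * w i)"
      using factor by (intro prod_mono) auto
    also have "\<dots> = (1/2) ^ n * (\<Prod>i=1..n. w i)"
      by (subst prod.distrib) simp
    also have "(\<Prod>i=1..n. w i) = W ^ card ({1..n} \<inter> {i. i \<le> M})"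
      unfolding w_def by (simp add: prod.If_cases)
    also have "\<dots> \<le> W ^ M"
    proof (rule power_increasing[OF _ W])
      have "card ({1..n} \<inter> {i. i \<le> M}) \<le> card {1..M}" by (intro card_mono) auto
      then show "card ({1..n} \<inter> {i. i \<le> M}) \<le> M" by simp
    qed
    finally show ?thesis by simp
  qed
  then show ?thesis using W by (intro that[of "W ^ M"]) (auto simp: mult.commute)
qed

lemma lam_init_geometric:
  assumes lim: "lam \<longlonglongrightarrow> 0"
  obtains Y where "Y > 0"
    "\<And>d. d \<ge> 1 \<Longrightarrow> lam_init lam I d \<le> Y * (2 * max 1 (lam 1)) ^ b_num I d * (1/2) ^ d"
proof -
  obtain Y where Y: "Y > 0" "\<And>n. (\<Prod>i=1..n. lam i) \<le> Y * (1/2) ^ n"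
    using prod_lam_geometric[OF lim] by blast
  define L where "L = max 1 (lam 1)"
  have L: "L \<ge> 1" "lam 1 \<le> L" unfolding L_def by auto
  have "lam_init lam I d \<le> Y * (2 * L) ^ b_num I d * (1/2) ^ d" if d: "d \<ge> 1" for d
  proof -
    have "lam_init lam I d \<le> L ^ b_num I d * (Y * (1/2) ^ a_num I d)"
      unfolding lam_init_eq[OF d] top_eig_def using Y L lam1_pos
      by (intro mult_mono power_mono prod_nonneg) (auto intro: lam_nonneg)
    also have "(1/2::real) ^ a_num I d = (1/2) ^ d * 2 ^ b_num I d"
    proof -
      have "(1/2::real) ^ d = (1/2) ^ a_num I d * (1/2) ^ b_num I d"
        using a_plus_b[OF d] by (metis power_add)
      then show ?thesis by (simp add: power_one_over)
    qed
    finally show ?thesis by (simp add: power_mult_distrib mult_ac)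
  qed
  then show ?thesis using Y(1) that unfolding L_def by blast
qed

text \<open>Step (4), continued: with the logarithmic bound on b_d the factor
  (2 max(1, lambda_1))^{b_d} grows only polynomially, so lam_init d <= Y d^A 2^{-d}.\<close>
lemma lam_init_quasi_geometric:
  assumes lim: "lam \<longlonglongrightarrow> 0" and b_bound: "\<And>d. d \<ge> 1 \<Longrightarrow> real (b_num I d) \<le> K * (1 + q * ln (real d))"
  obtains Y A where "Y > 0" "\<And>d. d \<ge> 1 \<Longrightarrow> lam_init lam I d \<le> Y * real d powr A * (1/2) ^ d"
proof -
  define L where "L = 2 * max 1 (lam 1)"
  have L: "L \<ge> 1" unfolding L_def by simp
  obtain Y where Y: "Y > 0" "\<And>d. d \<ge> 1 \<Longrightarrow> lam_init lam I d \<le> Y * L ^ b_num I d * (1/2) ^ d"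
    unfolding L_def using lam_init_geometric[OF lim] by blast
  define c where "c = ln L"
  have c: "c \<ge> 0" unfolding c_def using L by simp
  have "lam_init lam I d \<le> (Y * exp (K * c)) * real d powr (K * q * c) * (1/2) ^ d"
    if d: "d \<ge> 1" for d
  proof -
    have "L ^ b_num I d = exp (real (b_num I d) * c)"
      unfolding c_def using L by (simp add: exp_of_nat_mult)
    also have "\<dots> \<le> exp (K * (1 + q * ln (real d)) * c)"
      using mult_right_mono[OF b_bound[OF d] c] by simp
    also have "\<dots> = exp (K * c) * real d powr (K * q * c)"
      using d by (simp add: powr_def exp_add[symmetric] algebra_simps)
    finally have "L ^ b_num I d \<le> exp (K * c) * real d powr (K * q * c)" .
    then have "Y * L ^ b_num I d * (1/2) ^ d \<le> Y * (exp (K * c) * real d powr (K * q * c)) * (1/2) ^ d"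
      using Y(1) by (intro mult_right_mono mult_left_mono) auto
    then show ?thesis using Y(2)[OF d] by (simp add: mult_ac)
  qed
  then show ?thesis using Y(1) by (intro that[of "Y * exp (K * c)"]) auto
qed

lemma lam_init_superpoly:
  assumes lim: "lam \<longlonglongrightarrow> 0"
    and b_bound: "\<And>d. d \<ge> 1 \<Longrightarrow> real (b_num I d) \<le> K * (1 + q * ln (real d))"
  shows "(\<lambda>d. lam_init lam I d * poly P (real d)) \<longlonglongrightarrow> 0"
proof -
  obtain Y A where Y: "Y > 0" "\<And>d. d \<ge> 1 \<Longrightarrow> lam_init lam I d \<le> Y * real d powr A * (1/2) ^ d"
    using lam_init_quasi_geometric[OF lim b_bound] by blast
  obtain Kp N where Kp: "Kp \<ge> 0" "\<And>x::real. x \<ge> 1 \<Longrightarrow> \<bar>poly P x\<bar> \<le> Kp * x ^ N"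
    using poly_growth_bound[of P] by blast
  define g where "g = (\<lambda>x::real. Y * Kp * (x powr A * x ^ N * (1/2) powr x))"
  have "((\<lambda>x::real. x powr A * x ^ N * (1/2) powr x) \<longlongrightarrow> 0) at_top" by real_asymp
  then have "(g \<longlongrightarrow> 0) at_top" unfolding g_def by (rule tendsto_mult_right_zero)
  then have g_lim: "(\<lambda>d::nat. g (real d)) \<longlonglongrightarrow> 0"
    by (rule filterlim_compose[OF _ filterlim_real_sequentially])
  have majorized: "norm (lam_init lam I d * poly P (real d)) \<le> g (real d)" if d: "d \<ge> 1" for d
  proof -
    have "lam_init lam I d \<ge> 0" using lam_init_eq[OF d] top_eig_nonneg by simp
    then have "norm (lam_init lam I d * poly P (real d)) = lam_init lam I d * \<bar>poly P (real d)\<bar>"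
      by (simp add: abs_mult)
    also have "\<dots> \<le> (Y * real d powr A * (1/2) ^ d) * (Kp * real d ^ N)"
      using Kp(2)[of "real d"] d Y(1) by (intro mult_mono[OF Y(2)[OF d]]) auto
    also have "(1/2::real) ^ d = (1/2) powr real d" by (simp add: powr_realpow)
    finally show ?thesis unfolding g_def by (simp add: mult_ac)
  qed
  show ?thesis
    by (intro Lim_null_comparison[OF _ g_lim] eventually_mono[OF eventually_ge_at_top[of 1] majorized])
qed

end

lemma log_bound_bigo_ln:
  fixes b :: "nat \<Rightarrow> nat" and K q :: real
  assumes K: "K \<ge> 0" and q: "q \<ge> 0"
    and bound: "\<And>d. d \<ge> 1 \<Longrightarrow> real (b d) \<le> K * (1 + q * ln (real d))"
  shows "(\<lambda>d. real (b d)) \<in> O(\<lambda>d. ln (real d))"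
proof (rule bigoI[where c = "K * (1 + q)"])
  show "\<forall>\<^sub>F d in at_top. norm (real (b d)) \<le> K * (1 + q) * norm (ln (real d))"
    using eventually_ge_at_top[of "3::nat"]
  proof eventually_elim
    case (elim d)
    have "ln 3 \<le> ln (real d)" using elim by simp
    then have ln_d: "ln (real d) \<ge> 1" using ln3_gt_1 by linarith
    have "real (b d) \<le> K * (1 + q * ln (real d))" using bound elim by simp
    also have "\<dots> \<le> K * (ln (real d) + q * ln (real d))" using K ln_d by (intro mult_left_mono) auto
    also have "\<dots> = K * (1 + q) * ln (real d)" by (simp add: algebra_simps)
    finally show ?case using ln_d by simp
  qed
qed

lemma log_bound_fraction_tendsto:
  fixes a b :: "nat \<Rightarrow> nat" and K q :: real
  assumes sum: "\<And>d. d \<ge> 1 \<Longrightarrow> a d + b d = d"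
    and bound: "\<And>d. d \<ge> 1 \<Longrightarrow> real (b d) \<le> K * (1 + q * ln (real d))"
  shows "(\<lambda>d. real (a d) / real d) \<longlonglongrightarrow> 1"
proof -
  have "((\<lambda>x::real. K * (1 + q * ln x) / x) \<longlongrightarrow> 0) at_top" by real_asymp
  then have majorant: "(\<lambda>d::nat. K * (1 + q * ln (real d)) / real d) \<longlonglongrightarrow> 0"
    by (rule filterlim_compose[OF _ filterlim_real_sequentially])
  have "(\<lambda>d. real (b d) / real d) \<longlonglongrightarrow> 0"
    by (intro Lim_null_comparison[OF _ majorant] eventually_mono[OF eventually_ge_at_top[of 1]])
       (simp add: bound divide_right_mono)
  then have "(\<lambda>d. 1 - real (b d) / real d) \<longlonglongrightarrow> 1 - 0"
    by (intro tendsto_diff tendsto_const)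
  moreover have "\<forall>\<^sub>F d in sequentially. 1 - real (b d) / real d = real (a d) / real d"
    using eventually_ge_at_top[of 1]
  proof eventually_elim
    case (elim d)
    then have "real (a d) + real (b d) = real d" using sum by (metis of_nat_add)
    then show ?case using elim by (simp add: field_simps)
  qed
  ultimately show ?thesis by (simp add: tendsto_cong)
qed

theorem proposition10:
  fixes lam :: "nat \<Rightarrow> real" and I :: "nat \<Rightarrow> nat set" and C p q :: real
  assumes lam_nonneg: "\<And>m. m \<ge> 1 \<Longrightarrow> lam m \<ge> 0"
    and lam_mono: "\<And>m n. 1 \<le> m \<Longrightarrow> m \<le> n \<Longrightarrow> lam n \<le> lam m"
    and lam_lim: "lam \<longlonglongrightarrow> 0"
    and lam2_pos: "lam 2 > 0"
    and I_sub: "\<And>d. d \<ge> 1 \<Longrightarrow> I d \<subseteq> {1..d}"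
    and I_ne: "\<And>d. d \<ge> 1 \<Longrightarrow> I d \<noteq> {}"
    and I_1: "I 1 = {1}"
    and init_pos: "\<And>d. d \<ge> 1 \<Longrightarrow> eps_init lam I d > 0"
    and C_pos: "C > 0" and p_pos: "p > 0" and q_nonneg: "q \<ge> 0"
    and PT: "normalized_bound lam I C p q"
  shows "(\<forall>\<tau>. \<tau> > p / 2 \<longrightarrow> summable (\<lambda>m. lam (Suc m) powr \<tau>))
       \<and> (\<forall>P :: real poly. (\<forall>d::nat. d \<ge> 1 \<longrightarrow> poly P (real d) > 0) \<longrightarrow>
            ((\<lambda>d. lam_init lam I d * poly P (real d)) \<longlonglongrightarrow> 0))
       \<and> (\<lambda>d. real (b_num I d)) \<in> O(\<lambda>d. ln (real d))
       \<and> ((\<lambda>d. real (a_num I d) / real d) \<longlonglongrightarrow> 1)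
       \<and> (strongly_poly_tractable_A lam I \<longrightarrow> (\<lambda>d. real (b_num I d)) \<in> O(\<lambda>_. 1))"
proof -
  interpret eigen_setting lam I
    using lam_nonneg lam_mono lam2_pos I_sub by unfold_locales
  obtain K where K: "K \<ge> 0" "\<And>d. d \<ge> 1 \<Longrightarrow> real (b_num I d) \<le> K * (1 + q * ln (real d))"
    using free_coords_log_bound[OF PT C_pos less_imp_le[OF p_pos] q_nonneg init_pos] by auto
  have "\<forall>\<tau>. \<tau> > p / 2 \<longrightarrow> summable (\<lambda>m. lam (Suc m) powr \<tau>)"
    using lam_summable_powr[OF PT _ p_pos I_1] C_pos by simp
  moreover have "\<forall>P. (\<lambda>d. lam_init lam I d * poly P (real d)) \<longlonglongrightarrow> 0"
    using lam_init_superpoly[OF lam_lim K(2)] by blast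
  moreover have "(\<lambda>d. real (b_num I d)) \<in> O(\<lambda>d. ln (real d))"
    by (rule log_bound_bigo_ln[OF K(1) q_nonneg K(2)])
  moreover have "(\<lambda>d. real (a_num I d) / real d) \<longlonglongrightarrow> 1"
    by (rule log_bound_fraction_tendsto[OF a_plus_b K(2)])
  moreover have "strongly_poly_tractable_A lam I \<longrightarrow> (\<lambda>d. real (b_num I d)) \<in> O(\<lambda>_. 1)"
    using free_coords_bounded[OF _ init_pos] by blast
  ultimately show ?thesis by blast
qed

end
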